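(* Let $\mathcal{N}=(D,P)$ be a broadcast network with client $P=(Q,I,\delta)$, let $G$ be its associated graph, and let $V_1,V_2$ be vertices of $G$. There is a path from $V_1$ to $V_2$ in $G$ if and only if there is a path in normal form from $V_1$ to $V_2$ in $G$.
   Context: A broadcast network is a pair $\mathcal{N}=(D,P)$ where $D$ is a finite set of messages and $P=(Q,I,\delta)$ is a finite automaton with transition relation $\delta\subseteq Q\times \mathrm{Ops}(D)\times Q$, $\mathrm{Ops}(D)=\{!a,\ ?a : a\in D\}$; write $q\xrightarrow{o}q'$ for $(q,o,q')\in\delta$. For $S\subseteq Q$ and $a\in D$ let $\mathrm{Post}_{?a}(S)=\{r'\in Q: \exists r\in S,\ r\xrightarrow{?a}r'\}$ and $\mathrm{Enabled}_{?a}(S)=\{r\in S : \mathrm{Post}_{?a}(\{r\})\neq\emptyset\}$. The graph $G=(V,\to_G)$ has vertex set $V=\bigcup_{k\le|Q|}(2^Q)^k$. There is an edge $(S_1,\dots,S_k)\to_G(S'_1,\dots,S'_k)$ iff: (1) there are $j\in[1..k]$, $s\in S_j$, $s'\in S'_j$, $a\in D$ with $s\xrightarrow{!a}s'$; (2) for each $i\in[1..k]$ there are $\mathrm{Gen}_i\subseteq\mathrm{Post}_{?a}(S_i)$ and $\mathrm{Kill}_i\subseteq\mathrm{Enabled}_{?a}(S_i)$ such that $S'_i=(S_i\setminus\mathrm{Kill}_i)\cup\mathrm{Gen}_i$ for $i\neq j$ and $S'_j=(U_j\setminus\mathrm{Kill}_j)\cup\mathrm{Gen}_j\cup\{s'\}$,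 where $U_j$ is either $S_j$ or $S_j\setminus\{s\}$; (3) for each $i$ and each $q\in\mathrm{Kill}_i$, $\mathrm{Post}_{?a}(\{q\})\cap\mathrm{Gen}_i\neq\emptyset$. A path is a finite sequence of vertices with consecutive ones joined by edges (possibly of length zero). A path $W_1\to_G\cdots\to_G W_n$ is in normal form if there is $m\in[1..n]$ such that $W_i\sqsubseteq W_{i+1}$ for all $i\in[1..m-1]$ and $W_i\sqsupseteq W_{i+1}$ for all $i\in[m..n-1]$, where $\sqsubseteq$ is componentwise inclusion of tuples of sets. *)

theory Defs
  imports Main
begin

datatype 'd op = Send 'd | Recv 'd

definition ops :: "'d set \<Rightarrow> 'd op set" where
  "ops D = Send ` D \<union> Recv ` D"

definition broadcast_network ::
  "'d set \<Rightarrow> 'q set \<Rightarrow> 'q set \<Rightarrow> ('q \<times> 'd op \<times> 'q) set \<Rightarrow> bool" where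
  "broadcast_network D Q I \<delta> \<longleftrightarrow> finite D \<and> finite Q \<and> I \<subseteq> Q \<and>
     \<delta> \<subseteq> Q \<times> ops D \<times> Q"

definition Post_recv :: "('q \<times> 'd op \<times> 'q) set \<Rightarrow> 'd \<Rightarrow> 'q set \<Rightarrow> 'q set" where
  "Post_recv \<delta> a S = {r'. \<exists>r\<in>S. (r, Recv a, r') \<in> \<delta>}"

definition Enabled_recv :: "('q \<times> 'd op \<times> 'q) set \<Rightarrow> 'd \<Rightarrow> 'q set \<Rightarrow> 'q set" where
  "Enabled_recv \<delta> a S = {r\<in>S. Post_recv \<delta> a {r} \<noteq> {}}"

definition vertices :: "'q set \<Rightarrow> 'q set list set" where
  "vertices Q = {W. length W \<le> card Q \<and> (\<forall>S\<in>set W. S \<subseteq> Q)}"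

definition edge ::
  "'d set \<Rightarrow> 'q set \<Rightarrow> ('q \<times> 'd op \<times> 'q) set \<Rightarrow> 'q set list \<Rightarrow> 'q set list \<Rightarrow> bool" where
  "edge D Q \<delta> W W' \<longleftrightarrow>
     W \<in> vertices Q \<and> W' \<in> vertices Q \<and> length W' = length W \<and>
     (\<exists>j s s' a. j < length W \<and> s \<in> W ! j \<and> s' \<in> W' ! j \<and> a \<in> D \<and>
        (s, Send a, s') \<in> \<delta> \<and>
        (\<exists>Gen Kill :: nat \<Rightarrow> 'q set.
           (\<forall>i<length W. Gen i \<subseteq> Post_recv \<delta> a (W ! i) \<and>
                          Kill i \<subseteq> Enabled_recv \<delta> a (W ! i)) \<and>
           (\<forall>i<length W. i \<noteq> j \<longrightarrow> W' ! i = (W ! i - Kill i) \<union> Gen i) \<and>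
           (\<exists>U. (U = W ! j \<or> U = W ! j - {s}) \<and>
                W' ! j = (U - Kill j) \<union> Gen j \<union> {s'}) \<and>
           (\<forall>i<length W. \<forall>q\<in>Kill i. Post_recv \<delta> a {q} \<inter> Gen i \<noteq> {})))"

definition is_path ::
  "'d set \<Rightarrow> 'q set \<Rightarrow> ('q \<times> 'd op \<times> 'q) set \<Rightarrow> 'q set list list \<Rightarrow> bool" where
  "is_path D Q \<delta> ps \<longleftrightarrow> ps \<noteq> [] \<and> (\<forall>W\<in>set ps. W \<in> vertices Q) \<and>
     (\<forall>i. Suc i < length ps \<longrightarrow> edge D Q \<delta> (ps ! i) (ps ! Suc i))"

definition tuple_le :: "'q set list \<Rightarrow> 'q set list \<Rightarrow> bool" where
  "tuple_le W W' \<longleftrightarrow> list_all2 (\<subseteq>) W W'"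

(* normal form (0-indexed: m < length ps) *)
definition normal_form :: "'q set list list \<Rightarrow> bool" where
  "normal_form ps \<longleftrightarrow> (\<exists>m<length ps.
     (\<forall>i. Suc i \<le> m \<longrightarrow> tuple_le (ps ! i) (ps ! Suc i)) \<and>
     (\<forall>i. m \<le> i \<and> Suc i < length ps \<longrightarrow> tuple_le (ps ! Suc i) (ps ! i)))"

end

theory Submission
  imports Defs
begin

text \<open>Replace the vertices W_0, ..., W_(n-1) of a path by componentwise unions
  W_a \<union> ... \<union> W_b over a window [a..b] that first grows as [0..k] and then shrinks as
  [k..n-1]. This sequence increases and then decreases, starts at W_0 and ends at W_(n-1).
  Each of its steps is still an edge: an edge survives enlarging its source and target as long
  as every state that disappears along the enlarged step also disappeared along the original
  one, since then the original sender, killed states and generated states can be reused.\<close>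

lemma Post_recv_mono: "S \<subseteq> T \<Longrightarrow> Post_recv \<delta> a S \<subseteq> Post_recv \<delta> a T"
  unfolding Post_recv_def by blast

lemma Enabled_recv_mono: "S \<subseteq> T \<Longrightarrow> Enabled_recv \<delta> a S \<subseteq> Enabled_recv \<delta> a T"
  unfolding Enabled_recv_def by blast

lemma edge_enlarge:
  assumes e: "edge D Q \<delta> W W'"
    and X: "X \<in> vertices Q" "X' \<in> vertices Q" "length X = length W" "length X' = length W"
    and enlarge: "\<And>i. i < length W \<Longrightarrow>
      W!i \<subseteq> X!i \<and> W'!i \<subseteq> X'!i \<and> X'!i \<subseteq> X!i \<union> W'!i \<and> X!i - X'!i \<subseteq> W!i - W'!i"
  shows "edge D Q \<delta> X X'"
proof -
  from e obtain j s s' a Gen Kill U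
    where j: "j < length W" and send: "s \<in> W!j" "s' \<in> W'!j" "a \<in> D" "(s, Send a, s') \<in> \<delta>"
      and GK: "\<forall>i<length W. Gen i \<subseteq> Post_recv \<delta> a (W!i) \<and> Kill i \<subseteq> Enabled_recv \<delta> a (W!i)"
      and other: "\<forall>i<length W. i \<noteq> j \<longrightarrow> W'!i = (W!i - Kill i) \<union> Gen i"
      and U: "U = W!j \<or> U = W!j - {s}" "W'!j = (U - Kill j) \<union> Gen j \<union> {s'}"
      and gen: "\<forall>i<length W. \<forall>q\<in>Kill i. Post_recv \<delta> a {q} \<inter> Gen i \<noteq> {}"
    unfolding edge_def by metis
  define Kill' where "Kill' i = (X!i - X'!i) \<inter> Kill i" for i
  define U' where "U' = (if s \<in> X'!j then X!j else X!j - {s})"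
  have GK': "Gen i \<subseteq> Post_recv \<delta> a (X!i) \<and> Kill' i \<subseteq> Enabled_recv \<delta> a (X!i)"
    if "i < length X" for i
  proof -
    from that X(3) have i: "i < length W" by simp
    with enlarge have "W!i \<subseteq> X!i" by blast
    moreover have "Kill' i \<subseteq> Kill i" unfolding Kill'_def by blast
    ultimately show ?thesis
      using GK i Post_recv_mono[of "W!i" "X!i" \<delta> a] Enabled_recv_mono[of "W!i" "X!i" \<delta> a]
      by blast
  qed
  have other': "X'!i = (X!i - Kill' i) \<union> Gen i" if "i < length X" "i \<noteq> j" for i
  proof -
    from that X(3) have i: "i < length W" by simp
    with that other have "W'!i = (W!i - Kill i) \<union> Gen i" by blast
    with enlarge[OF i] show ?thesis unfolding Kill'_def by blast
  qed
  have sender': "X'!j = (U' - Kill' j) \<union> Gen j \<union> {s'}"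
    using enlarge[OF j] U unfolding Kill'_def U'_def by auto
  have gen': "\<forall>q\<in>Kill' i. Post_recv \<delta> a {q} \<inter> Gen i \<noteq> {}" if "i < length X" for i
    using gen that X(3) unfolding Kill'_def by auto
  have "j < length X" "s \<in> X!j" "s' \<in> X'!j" "U' = X!j \<or> U' = X!j - {s}"
    using enlarge[OF j] send j X(3) by (auto simp: U'_def)
  with X send GK' other' sender' gen' show ?thesis
    unfolding edge_def
    by (intro conjI exI[of _ j] exI[of _ s] exI[of _ s'] exI[of _ a] exI[of _ Gen] exI[of _ Kill']
        exI[of _ U'] allI impI) simp_all
qed

lemma is_path_length_nth:
  assumes "is_path D Q \<delta> ps" "t < length ps"
  shows "length (ps!t) = length (hd ps)"
  using assms(2)
proof (induction t)
  case 0
  with assms(1) show ?case by (simp add: hd_conv_nth is_path_def)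
next
  case (Suc t)
  then have "edge D Q \<delta> (ps!t) (ps!Suc t)" using assms(1) unfolding is_path_def by auto
  with Suc show ?case unfolding edge_def by auto
qed

definition union_window :: "'q set list list \<Rightarrow> nat \<Rightarrow> nat \<Rightarrow> 'q set list" where
  "union_window ps a b = map (\<lambda>i. \<Union>t\<in>{a..b}. ps!t!i) [0..<length (hd ps)]"

lemma length_union_window [simp]: "length (union_window ps a b) = length (hd ps)"
  by (simp add: union_window_def)

lemma nth_union_window [simp]:
  "i < length (hd ps) \<Longrightarrow> union_window ps a b ! i = (\<Union>t\<in>{a..b}. ps!t!i)"
  by (simp add: union_window_def)

lemma union_window_mono:
  assumes "a' \<le> a" "b \<le> b'"
  shows "tuple_le (union_window ps a b) (union_window ps a' b')"
proof -
  have "{a..b} \<subseteq> {a'..b'}" using assms by auto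
  then show ?thesis unfolding tuple_le_def list_all2_conv_all_nth by (simp add: UN_mono)
qed

lemma union_window_singleton:
  assumes "is_path D Q \<delta> ps" "a < length ps"
  shows "union_window ps a a = ps!a"
  by (rule nth_equalityI) (use is_path_length_nth[OF assms] in auto)

lemma union_window_in_vertices:
  assumes p: "is_path D Q \<delta> ps" and b: "b < length ps"
  shows "union_window ps a b \<in> vertices Q"
proof -
  have "ps!t!i \<subseteq> Q" if "t \<in> {a..b}" "i < length (hd ps)" for t i
  proof -
    have "t < length ps" using that b by auto
    with p that have "ps!t \<in> vertices Q" "ps!t!i \<in> set (ps!t)"
      using is_path_length_nth[OF p] by (auto simp: is_path_def)
    then show ?thesis unfolding vertices_def by auto
  qed
  then have "\<forall>S\<in>set (union_window ps a b). S \<subseteq> Q"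
    by (fastforce simp: in_set_conv_nth)
  moreover have "length (hd ps) \<le> card Q"
    using p by (cases ps) (auto simp: is_path_def vertices_def)
  ultimately show ?thesis by (simp add: vertices_def)
qed

lemma edge_union_window_extend:
  assumes p: "is_path D Q \<delta> ps" and "a \<le> b" "Suc b < length ps"
  shows "edge D Q \<delta> (union_window ps a b) (union_window ps a (Suc b))"
proof (rule edge_enlarge)
  have len: "length (ps!b) = length (hd ps)" using is_path_length_nth[OF p] assms(3) by simp
  show "edge D Q \<delta> (ps!b) (ps!Suc b)" using p assms(3) by (simp add: is_path_def)
  show "union_window ps a b \<in> vertices Q" "union_window ps a (Suc b) \<in> vertices Q"
    using union_window_in_vertices[OF p] assms(3) by simp_all
  show "length (union_window ps a b) = length (ps!b)"
    "length (union_window ps a (Suc b)) = length (ps!b)"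
    using len by simp_all
  have "{a..Suc b} = insert (Suc b) {a..b}" using assms(2) by auto
  then show "ps!b!i \<subseteq> union_window ps a b ! i \<and> ps!Suc b!i \<subseteq> union_window ps a (Suc b) ! i \<and>
      union_window ps a (Suc b) ! i \<subseteq> union_window ps a b ! i \<union> ps!Suc b!i \<and>
      union_window ps a b ! i - union_window ps a (Suc b) ! i \<subseteq> ps!b!i - ps!Suc b!i"
    if "i < length (ps!b)" for i
    using that assms(2) len by auto
qed

lemma edge_union_window_retract:
  assumes p: "is_path D Q \<delta> ps" and "a < b" "b < length ps"
  shows "edge D Q \<delta> (union_window ps a b) (union_window ps (Suc a) b)"
proof (rule edge_enlarge)
  have len: "length (ps!a) = length (hd ps)" using is_path_length_nth[OF p] assms(2,3) by simp
  show "edge D Q \<delta> (ps!a) (ps!Suc a)" using p assms(2,3) by (simp add: is_path_def)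
  show "union_window ps a b \<in> vertices Q" "union_window ps (Suc a) b \<in> vertices Q"
    using union_window_in_vertices[OF p] assms(3) by simp_all
  show "length (union_window ps a b) = length (ps!a)"
    "length (union_window ps (Suc a) b) = length (ps!a)"
    using len by simp_all
  have "{a..b} = insert a {Suc a..b}" "Suc a \<in> {Suc a..b}" using assms(2) by auto
  then show "ps!a!i \<subseteq> union_window ps a b ! i \<and> ps!Suc a!i \<subseteq> union_window ps (Suc a) b ! i \<and>
      union_window ps (Suc a) b ! i \<subseteq> union_window ps a b ! i \<union> ps!Suc a!i \<and>
      union_window ps a b ! i - union_window ps (Suc a) b ! i \<subseteq> ps!a!i - ps!Suc a!i"
    if "i < length (ps!a)" for i
    using that len by fastforce
qed

definition normalize_path :: "'q set list list \<Rightarrow> 'q set list list" where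
  "normalize_path ps =
     map (\<lambda>k. union_window ps (k - (length ps - 1)) (min k (length ps - 1)))
       [0..<2 * length ps - 1]"

lemma length_normalize_path: "length (normalize_path ps) = 2 * length ps - 1"
  by (simp add: normalize_path_def)

lemma nth_normalize_path:
  "k < 2 * length ps - 1 \<Longrightarrow>
    normalize_path ps ! k = union_window ps (k - (length ps - 1)) (min k (length ps - 1))"
  by (simp add: normalize_path_def)

lemma normalize_path_nonempty: "ps \<noteq> [] \<Longrightarrow> normalize_path ps \<noteq> []"
  by (cases ps) (simp_all add: normalize_path_def)

lemma is_path_normalize_path:
  assumes p: "is_path D Q \<delta> ps"
  shows "is_path D Q \<delta> (normalize_path ps)"
proof -
  define n where "n = length ps"
  have n: "n > 0" using p by (simp add: is_path_def n_def)
  have "edge D Q \<delta> (normalize_path ps ! k) (normalize_path ps ! Suc k)"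
    if k: "Suc k < 2 * n - 1" for k
  proof (cases "k < n - 1")
    case True
    have "normalize_path ps ! k = union_window ps 0 k"
      "normalize_path ps ! Suc k = union_window ps 0 (Suc k)"
      using True k by (simp_all add: nth_normalize_path flip: n_def)
    moreover have "Suc k < length ps" using True by (simp add: n_def)
    ultimately show ?thesis using edge_union_window_extend[OF p le0] by simp
  next
    case False
    have "normalize_path ps ! k = union_window ps (k - (n - 1)) (n - 1)"
      "normalize_path ps ! Suc k = union_window ps (Suc (k - (n - 1))) (n - 1)"
      using False k by (simp_all add: nth_normalize_path Suc_diff_le flip: n_def)
    moreover have "k - (n - 1) < n - 1" "n - 1 < length ps" using k n by (simp_all add: n_def)
    ultimately show ?thesis using edge_union_window_retract[OF p] by simp
  qed
  moreover have "W \<in> vertices Q" if "W \<in> set (normalize_path ps)" for W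
  proof -
    from that obtain k where "W = union_window ps (k - (n - 1)) (min k (n - 1))"
      unfolding normalize_path_def n_def by auto
    moreover have "min k (n - 1) < n" using n by (simp add: min_less_iff_disj)
    ultimately show ?thesis using union_window_in_vertices[OF p] by (simp add: n_def)
  qed
  moreover have "normalize_path ps \<noteq> []"
    using p by (simp add: is_path_def normalize_path_nonempty)
  ultimately show ?thesis
    by (simp add: is_path_def length_normalize_path flip: n_def)
qed

lemma normal_form_normalize_path:
  assumes "ps \<noteq> []"
  shows "normal_form (normalize_path ps)"
  unfolding normal_form_def
proof (intro exI conjI allI impI)
  let ?n = "length ps"
  have n: "?n > 0" using assms by simp
  then show "?n - 1 < length (normalize_path ps)" unfolding length_normalize_path by linarith
  show "tuple_le (normalize_path ps ! i) (normalize_path ps ! Suc i)" if "Suc i \<le> ?n - 1" for i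
    using that union_window_mono[of 0 0 i "Suc i" ps]
    by (simp add: nth_normalize_path min_def)
  show "tuple_le (normalize_path ps ! Suc i) (normalize_path ps ! i)"
    if i: "?n - 1 \<le> i \<and> Suc i < length (normalize_path ps)" for i
  proof -
    have "normalize_path ps ! i = union_window ps (i - (?n - 1)) (?n - 1)"
      "normalize_path ps ! Suc i = union_window ps (Suc i - (?n - 1)) (?n - 1)"
      using i by (simp_all add: nth_normalize_path length_normalize_path)
    then show ?thesis by (simp add: union_window_mono)
  qed
qed

lemma hd_normalize_path:
  assumes "is_path D Q \<delta> ps"
  shows "hd (normalize_path ps) = hd ps"
proof -
  have ne: "ps \<noteq> []" using assms by (simp add: is_path_def)
  then have "hd (normalize_path ps) = normalize_path ps ! 0"
    by (simp add: hd_conv_nth normalize_path_nonempty)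
  also have "\<dots> = union_window ps 0 0"
    using ne by (cases ps) (simp_all add: nth_normalize_path)
  also have "\<dots> = hd ps"
    using union_window_singleton[OF assms, of 0] ne by (simp add: hd_conv_nth)
  finally show ?thesis .
qed

lemma last_normalize_path:
  assumes "is_path D Q \<delta> ps"
  shows "last (normalize_path ps) = last ps"
proof -
  have ne: "ps \<noteq> []" using assms by (simp add: is_path_def)
  then have "last (normalize_path ps) = normalize_path ps ! (2 * (length ps - 1))"
    by (cases ps) (simp_all add: last_conv_nth normalize_path_nonempty length_normalize_path)
  also have "\<dots> = union_window ps (length ps - 1) (length ps - 1)"
    using ne by (cases ps) (simp_all add: nth_normalize_path)
  also have "\<dots> = last ps"
    using union_window_singleton[OF assms, of "length ps - 1"] ne by (simp add: last_conv_nth)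
  finally show ?thesis .
qed

theorem lemma3:
  fixes D :: "'d set" and Q I :: "'q set" and \<delta> :: "('q \<times> 'd op \<times> 'q) set"
    and V1 V2 :: "'q set list"
  assumes "broadcast_network D Q I \<delta>"
    and "V1 \<in> vertices Q" and "V2 \<in> vertices Q"
  shows "(\<exists>ps. is_path D Q \<delta> ps \<and> hd ps = V1 \<and> last ps = V2) \<longleftrightarrow>
         (\<exists>ps. is_path D Q \<delta> ps \<and> normal_form ps \<and> hd ps = V1 \<and> last ps = V2)"
proof
  assume "\<exists>ps. is_path D Q \<delta> ps \<and> hd ps = V1 \<and> last ps = V2"
  then obtain ps where p: "is_path D Q \<delta> ps" "hd ps = V1" "last ps = V2" by blast
  then have "ps \<noteq> []" by (simp add: is_path_def)
  with p show "\<exists>ps. is_path D Q \<delta> ps \<and> normal_form ps \<and> hd ps = V1 \<and> last ps = V2"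
    by (intro exI[of _ "normalize_path ps"])
      (simp add: is_path_normalize_path normal_form_normalize_path hd_normalize_path
        last_normalize_path)
next
  assume "\<exists>ps. is_path D Q \<delta> ps \<and> normal_form ps \<and> hd ps = V1 \<and> last ps = V2"
  then show "\<exists>ps. is_path D Q \<delta> ps \<and> hd ps = V1 \<and> last ps = V2" by auto
qed

end
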